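(* Assume the setting in the context and that Conditions (T), (M), (D), (S) and (G) all hold. (a) If $\widetilde{\operatorname{Tr}}^\Omega_{\mathcal{X}}\widehat{\mathbf{S}}^L_\Omega:\mathcal{N}_{\mathcal{X}}\to\mathcal{D}_{\mathcal{X}}$ is one-to-one, then for each $f\in\mathcal{D}_{\mathcal{X}}$ there is at most one $u\in\mathcal{X}^\Omega$ with $(\widehat Lu)|_\Omega=0$ and $\widetilde{\operatorname{Tr}}^\Omega_{\mathcal{X}}u=f$. If there is a constant $C_0$ with $\|g\|_{\mathcal{N}_{\mathcal{X}}}\le C_0\|\widetilde{\operatorname{Tr}}^\Omega_{\mathcal{X}}\widehat{\mathbf{S}}^L_\Omega g\|_{\mathcal{D}_{\mathcal{X}}}$ for all $g\in\mathcal{N}_{\mathcal{X}}$, then there is a constant $C_1$ such that every $u\in\mathcal{X}^\Omega$ with $(\widehat Lu)|_\Omega=0$ satisfies $\|u\|_{\mathcal{X}^\Omega}\le C_1\|\widetilde{\operatorname{Tr}}^\Omega_{\mathcal{X}}u\|_{\mathcal{D}_{\mathcal{X}}}$. (b) If $\widehat{\mathbf{M}}^\Omega_B\widehat{\mathbf{D}}^B_\Omega:\mathcal{D}_{\mathcal{X}}\to\mathcal{N}_{\mathcal{X}}$ is one-to-one, then for each $g\in\mathcal{N}_{\mathcal{X}}$ there is at most one $u\in\mathcal{X}^\Omega$ with $(\widehat Lu)|_\Omega=0$ and $\widehat{\mathbf{M}}^\Omega_Bu=g$. If there is a constant $C_0$ with $\|f\|_{\mathcal{D}_{\mathcal{X}}}\le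 C_0\|\widehat{\mathbf{M}}^\Omega_B\widehat{\mathbf{D}}^B_\Omega f\|_{\mathcal{N}_{\mathcal{X}}}$ for all $f\in\mathcal{D}_{\mathcal{X}}$, then there is a constant $C_1$ such that every $u\in\mathcal{X}^\Omega$ with $(\widehat Lu)|_\Omega=0$ satisfies $\|u\|_{\mathcal{X}^\Omega}\le C_1\|\widehat{\mathbf{M}}^\Omega_Bu\|_{\mathcal{N}_{\mathcal{X}}}$.
   Context: Let $\mathcal{X}^\Omega$, $\mathcal{D}_{\mathcal{X}}$, $\mathcal{N}_{\mathcal{X}}$ be quasi-Banach spaces. Let $u\mapsto(\widehat Lu)|_\Omega$ be a linear operator on $\mathcal{X}^\Omega$ (with values in some vector space), and let $\mathcal{K}^\Omega=\{u\in\mathcal{X}^\Omega:(\widehat Lu)|_\Omega=0\}$. Let $\widetilde{\operatorname{Tr}}^\Omega_{\mathcal{X}}:\mathcal{K}^\Omega\to\mathcal{D}_{\mathcal{X}}$, $\widehat{\mathbf{M}}^\Omega_B:\mathcal{K}^\Omega\to\mathcal{N}_{\mathcal{X}}$, $\widehat{\mathbf{D}}^B_\Omega:\mathcal{D}_{\mathcal{X}}\to\mathcal{X}^\Omega$ and $\widehat{\mathbf{S}}^L_\Omega:\mathcal{N}_{\mathcal{X}}\to\mathcal{X}^\Omega$ be linear operators. Conditions: (T) $\widetilde{\operatorname{Tr}}^\Omega_{\mathcal{X}}$ is bounded $\mathcal{K}^\Omega\to\mathcal{D}_{\mathcal{X}}$ (with the $\mathcal X^\Omega$ quasi-norm on $\mathcal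 K^\Omega$); (M) $\widehat{\mathbf{M}}^\Omega_B$ is bounded $\mathcal{K}^\Omega\to\mathcal{N}_{\mathcal{X}}$; (S) $\widehat{\mathbf{S}}^L_\Omega$ is bounded $\mathcal{N}_{\mathcal{X}}\to\mathcal{X}^\Omega$ and $\widehat{\mathbf{S}}^L_\Omega g\in\mathcal{K}^\Omega$ for all $g\in\mathcal{N}_{\mathcal{X}}$; (D) $\widehat{\mathbf{D}}^B_\Omega$ is bounded $\mathcal{D}_{\mathcal{X}}\to\mathcal{X}^\Omega$ and $\widehat{\mathbf{D}}^B_\Omega f\in\mathcal{K}^\Omega$ for all $f\in\mathcal{D}_{\mathcal{X}}$; (G) every $u\in\mathcal{K}^\Omega$ satisfies $u=-\widehat{\mathbf{D}}^B_\Omega(\widetilde{\operatorname{Tr}}^\Omega_{\mathcal{X}}u)+\widehat{\mathbf{S}}^L_\Omega(\widehat{\mathbf{M}}^\Omega_Bu)$. *)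

theory Defs
  imports "HOL-Analysis.Analysis"
begin

definition quasi_norm :: "('a::real_vector \<Rightarrow> real) \<Rightarrow> bool" where
  "quasi_norm q \<longleftrightarrow>
     (\<forall>x. 0 \<le> q x) \<and> (\<forall>x. q x = 0 \<longleftrightarrow> x = 0) \<and>
     (\<forall>c x. q (c *\<^sub>R x) = \<bar>c\<bar> * q x) \<and>
     (\<exists>\<kappa>\<ge>1. \<forall>x y. q (x + y) \<le> \<kappa> * (q x + q y))"

definition quasi_banach :: "('a::real_vector \<Rightarrow> real) \<Rightarrow> bool" where
  "quasi_banach q \<longleftrightarrow> quasi_norm q \<and>
     (\<forall>X :: nat \<Rightarrow> 'a. (\<forall>e>0. \<exists>N. \<forall>m\<ge>N. \<forall>n\<ge>N. q (X m - X n) < e) \<longrightarrow>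
        (\<exists>l. (\<lambda>n. q (X n - l)) \<longlonglongrightarrow> 0))"

definition linear_on :: "'a::real_vector set \<Rightarrow> ('a \<Rightarrow> 'b::real_vector) \<Rightarrow> bool" where
  "linear_on A T \<longleftrightarrow>
     (\<forall>x\<in>A. \<forall>y\<in>A. T (x + y) = T x + T y) \<and> (\<forall>c. \<forall>x\<in>A. T (c *\<^sub>R x) = c *\<^sub>R T x)"

definition bounded_on :: "'a set \<Rightarrow> ('a \<Rightarrow> real) \<Rightarrow> ('b \<Rightarrow> real) \<Rightarrow> ('a \<Rightarrow> 'b) \<Rightarrow> bool" where
  "bounded_on A qa qb T \<longleftrightarrow> (\<exists>C. \<forall>x\<in>A. qb (T x) \<le> C * qa x)"

end

theory Submission
  imports Defs
begin

text \<open>Both halves are instances of one abstract argument. Write the Green formula as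
\<open>u = A (P u) + B (Q u)\<close> on the kernel \<open>K\<close>: for (a) take \<open>P = Tr\<close>, \<open>B = S\<close>, \<open>Q = M\<close>,
\<open>A = -D\<close>; for (b) take \<open>P = M\<close>, \<open>B = D\<close>, \<open>Q = -Tr\<close>, \<open>A = S\<close>. If \<open>P u = 0\<close> then
\<open>u = B (Q u)\<close>, so injectivity of \<open>P \<circ> B\<close> forces \<open>Q u = 0\<close> and hence \<open>u = 0\<close>.
Quantitatively, \<open>P (B (Q u)) = P u - P (A (P u))\<close> is controlled by the norm of \<open>P u\<close>,
so the lower bound for \<open>P \<circ> B\<close> controls \<open>Q u\<close>, and the Green formula then controls
\<open>u\<close>.\<close>

lemma quasi_banach_imp_quasi_norm: "quasi_banach q \<Longrightarrow> quasi_norm q"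
  unfolding quasi_banach_def by blast

lemma quasi_norm_nonneg: "quasi_norm q \<Longrightarrow> 0 \<le> q x"
  unfolding quasi_norm_def by blast

lemma quasi_norm_minus:
  assumes "quasi_norm q"
  shows "q (- x) = q x"
proof -
  have "q ((-1) *\<^sub>R x) = \<bar>-1\<bar> * q x"
    using assms unfolding quasi_norm_def by blast
  then show ?thesis by simp
qed

lemma quasi_norm_triangle:
  assumes "quasi_norm q"
  obtains \<kappa> where "\<kappa> \<ge> 1" "\<And>x y. q (x + y) \<le> \<kappa> * (q x + q y)"
  using assms unfolding quasi_norm_def by blast

lemma bounded_on_nonneg_constant:
  assumes "bounded_on A qa qb T" "\<And>x. 0 \<le> qa x"
  shows "\<exists>C\<ge>0. \<forall>x\<in>A. qb (T x) \<le> C * qa x"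
proof -
  obtain C where C: "\<And>x. x \<in> A \<Longrightarrow> qb (T x) \<le> C * qa x"
    using assms(1) unfolding bounded_on_def by blast
  have "qb (T x) \<le> max C 0 * qa x" if "x \<in> A" for x
    using C[OF that] mult_right_mono[OF max.cobounded1 assms(2)] by (rule order_trans)
  then show ?thesis by (intro exI[of _ "max C 0"]) simp
qed

lemma bounded_on_uminus:
  assumes "bounded_on A qa qb T" "quasi_norm qb"
  shows "bounded_on A qa qb (\<lambda>x. - T x)"
  using assms unfolding bounded_on_def by (simp add: quasi_norm_minus)

lemma linear_on_0:
  assumes "linear_on K P" "subspace K"
  shows "P 0 = 0"
proof -
  have "P (0 *\<^sub>R 0) = 0 *\<^sub>R P 0"
    using assms subspace_0 unfolding linear_on_def by blast
  then show ?thesis by simp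
qed

lemma linear_on_diff:
  assumes "linear_on K P" "subspace K" "x \<in> K" "y \<in> K"
  shows "P (x - y) = P x - P y"
proof -
  have "P (x + (-1) *\<^sub>R y) = P x + (-1) *\<^sub>R P y"
    using assms subspace_scale[OF assms(2) assms(4)] unfolding linear_on_def by metis
  then show ?thesis by simp
qed

lemma inj_on_of_reproducing_formula:
  assumes K: "subspace K" and P: "linear_on K P"
    and reproduce: "\<And>u. u \<in> K \<Longrightarrow> u = A (P u) + B (Q u)"
    and A0: "A 0 = 0" and B0: "B 0 = 0"
    and inj_PB: "inj (\<lambda>q. P (B q))"
  shows "inj_on P K"
proof (rule inj_onI)
  fix u1 u2 assume "u1 \<in> K" "u2 \<in> K" "P u1 = P u2"
  define w where "w = u1 - u2"
  have "w \<in> K" "P w = 0"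
    using \<open>u1 \<in> K\<close> \<open>u2 \<in> K\<close> \<open>P u1 = P u2\<close> subspace_diff[OF K] linear_on_diff[OF P K]
    unfolding w_def by auto
  then have w: "w = B (Q w)"
    using reproduce A0 by force
  have "P (B (Q w)) = P (B 0)"
    using w \<open>P w = 0\<close> B0 linear_on_0[OF P K] by simp
  then have "Q w = 0"
    using inj_PB by (simp add: inj_def)
  then have "w = 0"
    using w B0 by simp
  then show "u1 = u2"
    unfolding w_def by simp
qed

lemma estimate_of_reproducing_formula:
  assumes K: "subspace K"
    and nX: "quasi_norm nX" and nP: "quasi_norm nP" and nQ: "\<And>q. 0 \<le> nQ q"
    and P: "linear_on K P" "bounded_on K nX nP P"
    and A: "bounded_on UNIV nP nX A" "\<And>p. A p \<in> K"
    and B: "bounded_on UNIV nQ nX B"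
    and reproduce: "\<And>u. u \<in> K \<Longrightarrow> u = A (P u) + B (Q u)"
    and coercive: "\<exists>C0. \<forall>q. nQ q \<le> C0 * nP (P (B q))"
  shows "\<exists>C1. \<forall>u\<in>K. nX u \<le> C1 * nP (P u)"
proof -
  obtain \<kappa>X where \<kappa>X: "\<kappa>X \<ge> 1" "\<And>x y. nX (x + y) \<le> \<kappa>X * (nX x + nX y)"
    using quasi_norm_triangle[OF nX] by blast
  obtain \<kappa>P where \<kappa>P: "\<kappa>P \<ge> 1" "\<And>x y. nP (x + y) \<le> \<kappa>P * (nP x + nP y)"
    using quasi_norm_triangle[OF nP] by blast
  obtain CP where CP: "CP \<ge> 0" "\<And>u. u \<in> K \<Longrightarrow> nP (P u) \<le> CP * nX u"
    using bounded_on_nonneg_constant[OF P(2) quasi_norm_nonneg[OF nX]] by blast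
  obtain CA where CA: "CA \<ge> 0" "\<And>p. nX (A p) \<le> CA * nP p"
    using bounded_on_nonneg_constant[OF A(1) quasi_norm_nonneg[OF nP]] by blast
  obtain CB where CB: "CB \<ge> 0" "\<And>q. nX (B q) \<le> CB * nQ q"
    using bounded_on_nonneg_constant[OF B nQ] by blast
  obtain C0 where C0: "C0 \<ge> 0" "\<And>q. nQ q \<le> C0 * nP (P (B q))"
  proof -
    have "bounded_on UNIV (\<lambda>q. nP (P (B q))) nQ (\<lambda>q. q)"
      using coercive unfolding bounded_on_def by simp
    from bounded_on_nonneg_constant[OF this quasi_norm_nonneg[OF nP]] that show ?thesis
      by auto
  qed
  have "nX u \<le> (\<kappa>X * (CA + CB * (C0 * (\<kappa>P * (1 + CP * CA))))) * nP (P u)"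
    if u: "u \<in> K" for u
  proof -
    let ?p = "nP (P u)"
    have "B (Q u) = u - A (P u)"
      using reproduce[OF u, symmetric] by (simp add: algebra_simps)
    then have "P (B (Q u)) = P u + - P (A (P u))"
      using linear_on_diff[OF P(1) K u A(2)] by simp
    then have "nP (P (B (Q u))) \<le> \<kappa>P * (?p + nP (P (A (P u))))"
      using \<kappa>P(2)[of "P u" "- P (A (P u))"] by (simp add: quasi_norm_minus[OF nP])
    also have "\<dots> \<le> \<kappa>P * (?p + CP * (CA * ?p))"
      using order_trans[OF CP(2)[OF A(2)] mult_left_mono[OF CA(2) CP(1)]] \<kappa>P(1) by simp
    finally have Qu: "nQ (Q u) \<le> C0 * (\<kappa>P * (?p + CP * (CA * ?p)))"
      using C0 order_trans mult_left_mono by metis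
    have "nX u \<le> \<kappa>X * (nX (A (P u)) + nX (B (Q u)))"
      using \<kappa>X(2)[of "A (P u)" "B (Q u)"] by (simp flip: reproduce[OF u])
    also have "\<dots> \<le> \<kappa>X * (CA * ?p + CB * (C0 * (\<kappa>P * (?p + CP * (CA * ?p)))))"
      using CA(2)[of "P u"] order_trans[OF CB(2) mult_left_mono[OF Qu CB(1)]] \<kappa>X(1)
      by (simp add: add_mono)
    finally show ?thesis
      by (simp add: algebra_simps)
  qed
  then show ?thesis by blast
qed
theorem theorem6p2:
  fixes nX :: "'x::real_vector \<Rightarrow> real"
    and nD :: "'d::real_vector \<Rightarrow> real"
    and nN :: "'n::real_vector \<Rightarrow> real"
    and L :: "'x \<Rightarrow> 'v::real_vector"
    and Tr :: "'x \<Rightarrow> 'd" and M :: "'x \<Rightarrow> 'n"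
    and D :: "'d \<Rightarrow> 'x" and S :: "'n \<Rightarrow> 'x"
    and K :: "'x set"
  assumes qbX: "quasi_banach nX" and qbD: "quasi_banach nD" and qbN: "quasi_banach nN"
    and linL: "linear L"
    and K_def: "K = {u. L u = 0}"
    and linTr: "linear_on K Tr" and linM: "linear_on K M"
    and linD: "linear D" and linS: "linear S"
    and T: "bounded_on K nX nD Tr"
    and Mb: "bounded_on K nX nN M"
    and S1: "bounded_on UNIV nN nX S" and S2: "\<forall>g. S g \<in> K"
    and D1: "bounded_on UNIV nD nX D" and D2: "\<forall>f. D f \<in> K"
    and G: "\<forall>u\<in>K. u = - D (Tr u) + S (M u)"
  shows "((inj (\<lambda>g. Tr (S g)) \<longrightarrow>
            (\<forall>f u1 u2. L u1 = 0 \<and> Tr u1 = f \<and> L u2 = 0 \<and> Tr u2 = f \<longrightarrow> u1 = u2)) \<and>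
          ((\<exists>C0. \<forall>g. nN g \<le> C0 * nD (Tr (S g))) \<longrightarrow>
            (\<exists>C1. \<forall>u. L u = 0 \<longrightarrow> nX u \<le> C1 * nD (Tr u))))
       \<and> ((inj (\<lambda>f. M (D f)) \<longrightarrow>
            (\<forall>g u1 u2. L u1 = 0 \<and> M u1 = g \<and> L u2 = 0 \<and> M u2 = g \<longrightarrow> u1 = u2)) \<and>
          ((\<exists>C0. \<forall>f. nD f \<le> C0 * nN (M (D f))) \<longrightarrow>
            (\<exists>C1. \<forall>u. L u = 0 \<longrightarrow> nX u \<le> C1 * nN (M u))))"
proof -
  have K: "subspace K"
    unfolding K_def using linL by (rule linear_subspace_kernel)
  have nX: "quasi_norm nX" and nD: "quasi_norm nD" and nN: "quasi_norm nN"
    using qbX qbD qbN by (auto intro: quasi_banach_imp_quasi_norm)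
  have green_a: "u = - D (Tr u) + S (M u)" if "u \<in> K" for u
    using G that by blast
  have green_b: "u = S (M u) + D (- Tr u)" if "u \<in> K" for u
    using G that linear_neg[OF linD] by (metis add.commute)
  have D_neg_K: "- D f \<in> K" for f
    using D2 subspace_neg[OF K] by blast
  have "inj (\<lambda>g. Tr (S g)) \<Longrightarrow> inj_on Tr K"
    by (rule inj_on_of_reproducing_formula[where A = "\<lambda>f. - D f" and B = S and Q = M,
          OF K linTr green_a]) (simp_all add: linear_0[OF linD] linear_0[OF linS])
  moreover have "inj (\<lambda>f. M (D f)) \<Longrightarrow> inj_on M K"
    by (rule inj_on_of_reproducing_formula[where A = S and B = D and Q = "\<lambda>u. - Tr u",
          OF K linM green_b]) (simp_all add: linear_0[OF linD] linear_0[OF linS])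
  moreover have "(\<exists>C0. \<forall>g. nN g \<le> C0 * nD (Tr (S g))) \<Longrightarrow> \<exists>C1. \<forall>u\<in>K. nX u \<le> C1 * nD (Tr u)"
    by (rule estimate_of_reproducing_formula[where A = "\<lambda>f. - D f" and B = S and Q = M,
          OF K nX nD quasi_norm_nonneg[OF nN] linTr T bounded_on_uminus[OF D1 nX] D_neg_K S1
          green_a])
  moreover have "(\<exists>C0. \<forall>f. nD f \<le> C0 * nN (M (D f))) \<Longrightarrow> \<exists>C1. \<forall>u\<in>K. nX u \<le> C1 * nN (M u)"
    by (rule estimate_of_reproducing_formula[where A = S and B = D and Q = "\<lambda>u. - Tr u",
          OF K nX nN quasi_norm_nonneg[OF nD] linM Mb S1 S2[rule_format] D1 green_b])
  ultimately show ?thesis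
    unfolding K_def inj_on_def by auto
qed

end
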